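(* Suppose $f$ satisfies (I), $f(\cdot,i,\mathbf q)\in C^1([0,\infty))$ for all $i\in S,\mathbf q\in D_i$, $f_t$ satisfies (I), and condition (R) holds. Let $Q^*\in\mathcal Q$ be such that $\Gamma^{Q^*}_i(Q^*_i)>\Gamma^{Q^*}_i(Q_i)$ for all $i\in S$ and all $Q\in\mathcal Q$ with $Q_i\ne Q^*_i$. Then $Q^*$ is a strong equilibrium.
   Context: Let $S=\{1,\dots,N\}$. For $i\in S$ let $E_i=\{q\in\mathbb R^N: q_j\ge0\text{ for }j\ne i,\ q_i=-\sum_{j\ne i}q_j\}$ and $D_i\subseteq E_i$ given; $\mathcal Q=\{Q\in\mathbb R^{N\times N}: Q_i\in D_i\ \forall i\}$, $Q_i$ the $i$-th row. For $Q\in\mathcal Q$, $X$ is a time-homogeneous continuous-time Markov chain on $S$ with generator $Q$, $\mathbb E_{i,Q}$ the expectation given $X_0=i$. A payoff function $f$ assigns $f(t,i,\mathbf q)\in\mathbb R$ to $t\ge0,i\in S,\mathbf q\in D_i$. Condition (I) for $g$: $\int_0^\infty\sup_{i\in S,\mathbf q\in D_i,\|\mathbf q\|\le c}|g(t,i,\mathbf q)|dt<\infty$ for all $c>0$. Condition (R): there is $r(t,\varepsilon;i,\mathbf q)$, continuous in $\varepsilon$, with $|f(t+\varepsilon,i,\mathbf q)-f(t,i,\mathbf q)-\varepsilon f_t(t,i,\mathbf q)|\le r(t,\varepsilon;i,\mathbf q)$ for all $t\ge0,\varepsilon>0,i,\mathbf q$, $\int_0^\infty r(t,\varepsilon;i,\mathbf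 q)dt<\infty$ for small $\varepsilon>0$, and $\varepsilon\mapsto r(t,\varepsilon;i,\mathbf q)/\varepsilon$ nondecreasing. $F(i,Q)=\mathbb E_{i,Q}[\int_0^\infty f(t,X_t,Q_{X_t})dt]$, $F(Q)=(F(1,Q),\dots,F(N,Q))$. $Q\otimes_\varepsilon Q'$: generator $Q$ on $[0,\varepsilon]$, then $Q'$ on $(\varepsilon,\infty)$; $F(i,Q\otimes_\varepsilon Q')$ its expected payoff from $X_0=i$. $Q^*\in\mathcal Q$ is a strong equilibrium if for every $i\in S$ and $Q\in\mathcal Q$ there is $\varepsilon>0$ with $F(i,Q^* )\ge F(i,Q\otimes_{\varepsilon'}Q^* )$ for all $0<\varepsilon'\le\varepsilon$. $\Gamma^{Q^*}_i(\mathbf q)=f(0,i,\mathbf q)+\mathbf q\cdot F(Q^* )$ for $\mathbf q\in D_i$. *)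

theory Defs
  imports "HOL-Analysis.Analysis"
begin

text \<open>State space S = the finite type 'n. Generators are real matrices indexed by 'n;
  the i-th row of Q is Q $ i.\<close>

definition E_set :: "'n::finite \<Rightarrow> (real^'n) set" where
  "E_set i = {q. (\<forall>j. j \<noteq> i \<longrightarrow> q $ j \<ge> 0) \<and> q $ i = - (\<Sum>j\<in>UNIV - {i}. q $ j)}"

definition gens :: "('n::finite \<Rightarrow> (real^'n) set) \<Rightarrow> (real^'n^'n) set" where
  "gens D = {Q. \<forall>i. Q $ i \<in> D i}"

fun mat_pow :: "real^'n^'n \<Rightarrow> nat \<Rightarrow> real^'n^'n" where
  "mat_pow Q 0 = mat 1"
| "mat_pow Q (Suc k) = Q ** mat_pow Q k"

definition mexp :: "real \<Rightarrow> real^'n^'n \<Rightarrow> real^'n^'n" where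
  "mexp t Q = (\<Sum>k. (t ^ k / fact k) *\<^sub>R mat_pow Q k)"

text \<open>Transition matrix P(0,t) of the chain Q \<otimes>_\<epsilon> Q' (generator Q on [0,\<epsilon>], Q' afterwards),
  and the generator in force at time t.\<close>
definition cat_trans :: "real^'n^'n \<Rightarrow> real \<Rightarrow> real^'n^'n \<Rightarrow> real \<Rightarrow> real^'n^'n" where
  "cat_trans Q \<epsilon> Q' t = (if t \<le> \<epsilon> then mexp t Q else mexp \<epsilon> Q ** mexp (t - \<epsilon>) Q')"

definition cat_gen :: "real^'n^'n \<Rightarrow> real \<Rightarrow> real^'n^'n \<Rightarrow> real \<Rightarrow> real^'n^'n" where
  "cat_gen Q \<epsilon> Q' t = (if t \<le> \<epsilon> then Q else Q')"

text \<open>Expected payoff E_{i,Q}[\<integral>_0^\<infinity> f(t,X_t,Q_{X_t}) dt], written via the marginal law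
  P(X_t = j | X_0 = i) = exp(tQ)_{ij}.\<close>
definition payoff :: "(real \<Rightarrow> 'n::finite \<Rightarrow> real^'n \<Rightarrow> real) \<Rightarrow> 'n \<Rightarrow> real^'n^'n \<Rightarrow> real" where
  "payoff f i Q = (LBINT t:{0..}. (\<Sum>j\<in>UNIV. mexp t Q $ i $ j * f t j (Q $ j)))"

definition payoff_vec :: "(real \<Rightarrow> 'n::finite \<Rightarrow> real^'n \<Rightarrow> real) \<Rightarrow> real^'n^'n \<Rightarrow> real^'n" where
  "payoff_vec f Q = (\<chi> j. payoff f j Q)"

definition payoff_cat :: "(real \<Rightarrow> 'n::finite \<Rightarrow> real^'n \<Rightarrow> real) \<Rightarrow> 'n \<Rightarrow> real^'n^'n \<Rightarrow> real \<Rightarrow> real^'n^'n \<Rightarrow> real" where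
  "payoff_cat f i Q \<epsilon> Q' = (LBINT t:{0..}.
      (\<Sum>j\<in>UNIV. cat_trans Q \<epsilon> Q' t $ i $ j * f t j (cat_gen Q \<epsilon> Q' t $ j)))"

definition cond_I :: "('n::finite \<Rightarrow> (real^'n) set) \<Rightarrow> (real \<Rightarrow> 'n \<Rightarrow> real^'n \<Rightarrow> real) \<Rightarrow> bool" where
  "cond_I D g \<longleftrightarrow> (\<forall>c>0. (\<integral>\<^sup>+ t. indicator {0..} t *
      (SUP p\<in>{(i, q). q \<in> D i \<and> norm q \<le> c}. ennreal \<bar>g t (fst p) (snd p)\<bar>) \<partial>lborel) < \<infinity>)"

definition cond_R :: "('n::finite \<Rightarrow> (real^'n) set) \<Rightarrow> (real \<Rightarrow> 'n \<Rightarrow> real^'n \<Rightarrow> real)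
    \<Rightarrow> (real \<Rightarrow> 'n \<Rightarrow> real^'n \<Rightarrow> real) \<Rightarrow> bool" where
  "cond_R D f ft \<longleftrightarrow> (\<exists>r :: real \<Rightarrow> real \<Rightarrow> 'n \<Rightarrow> real^'n \<Rightarrow> real.
      (\<forall>t i q. q \<in> D i \<longrightarrow> continuous_on {0<..} (\<lambda>\<epsilon>. r t \<epsilon> i q)) \<and>
      (\<forall>t \<epsilon> i q. t \<ge> 0 \<longrightarrow> \<epsilon> > 0 \<longrightarrow> q \<in> D i \<longrightarrow>
         \<bar>f (t + \<epsilon>) i q - f t i q - \<epsilon> * ft t i q\<bar> \<le> r t \<epsilon> i q) \<and>
      (\<forall>i q. q \<in> D i \<longrightarrow> (\<exists>\<epsilon>0>0. \<forall>\<epsilon>. 0 < \<epsilon> \<and> \<epsilon> \<le> \<epsilon>0 \<longrightarrow>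
         (\<integral>\<^sup>+ t. indicator {0..} t * ennreal (r t \<epsilon> i q) \<partial>lborel) < \<infinity>)) \<and>
      (\<forall>t i q. q \<in> D i \<longrightarrow> mono_on {0<..} (\<lambda>\<epsilon>. r t \<epsilon> i q / \<epsilon>)))"

definition Gamma :: "(real \<Rightarrow> 'n::finite \<Rightarrow> real^'n \<Rightarrow> real) \<Rightarrow> real^'n^'n \<Rightarrow> 'n \<Rightarrow> real^'n \<Rightarrow> real" where
  "Gamma f Qs i q = f 0 i q + q \<bullet> payoff_vec f Qs"

definition strong_equilibrium :: "('n::finite \<Rightarrow> (real^'n) set) \<Rightarrow> (real \<Rightarrow> 'n \<Rightarrow> real^'n \<Rightarrow> real)
    \<Rightarrow> real^'n^'n \<Rightarrow> bool" where
  "strong_equilibrium D f Qs \<longleftrightarrow> Qs \<in> gens D \<and>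
     (\<forall>i. \<forall>Q\<in>gens D. \<exists>\<epsilon>>0. \<forall>\<epsilon>'. 0 < \<epsilon>' \<and> \<epsilon>' \<le> \<epsilon> \<longrightarrow> payoff f i Qs \<ge> payoff_cat f i Q \<epsilon>' Qs)"

end

theory Submission
  imports Defs
begin

text \<open>Deviating to \<open>Q\<close> on \<open>[0, \<epsilon>]\<close> and following \<open>Q\<^sup>*\<close> afterwards is worth
  \<open>k(\<epsilon>) = \<integral>\<^sub>0\<^sup>\<epsilon> (e\<^sup>t\<^sup>Q r\<^sub>Q(t))\<^sub>i dt + (e\<^sup>\<epsilon>\<^sup>Q W(\<epsilon>))\<^sub>i\<close>, where \<open>r\<^sub>Q(t)\<^sub>j = f(t, j, Q\<^sub>j)\<close> and \<open>W(t)\<close> is the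
  vector of payoffs collected by \<open>Q\<^sup>*\<close> after time \<open>t\<close>. Since \<open>W' = -Q\<^sup>* W - r\<^sub>Q\<^sub>*\<close> and \<open>Q\<close> commutes
  with \<open>e\<^sup>t\<^sup>Q\<close>, one gets \<open>k'(t) = (e\<^sup>t\<^sup>Q a(t))\<^sub>i\<close> with \<open>a(t) = r\<^sub>Q(t) - r\<^sub>Q\<^sub>*(t) + (Q - Q\<^sup>*) W(t)\<close>, and
  \<open>a(0)\<^sub>j = \<Gamma>\<^sub>j(Q\<^sub>j) - \<Gamma>\<^sub>j(Q\<^sup>*\<^sub>j)\<close>. By the strict maximality of \<open>\<Gamma>\<close> and continuity, \<open>a(t) \<le> 0\<close>
  for small \<open>t > 0\<close>; as \<open>e\<^sup>t\<^sup>Q\<close> is a stochastic matrix, \<open>k\<close> decreases near \<open>0\<close>, so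
  \<open>F(i, Q \<otimes>\<^sub>\<epsilon> Q\<^sup>*) = k(\<epsilon>) \<le> k(0) = F(i, Q\<^sup>*)\<close>.\<close>

subsection \<open>The matrix exponential\<close>

definition matrix_l1_norm :: "real^'n::finite^'m::finite \<Rightarrow> real" where
  "matrix_l1_norm A = (\<Sum>a\<in>UNIV. \<Sum>b\<in>UNIV. \<bar>A $ a $ b\<bar>)"

lemma matrix_l1_norm_nonneg: "0 \<le> matrix_l1_norm A"
  unfolding matrix_l1_norm_def by (intro sum_nonneg) auto

lemma row_abs_sum_le_matrix_l1_norm: "(\<Sum>b\<in>UNIV. \<bar>A $ a $ b\<bar>) \<le> matrix_l1_norm A"
  unfolding matrix_l1_norm_def by (rule member_le_sum) (auto intro: sum_nonneg)

lemma abs_nth_le_matrix_l1_norm: "\<bar>A $ a $ b\<bar> \<le> matrix_l1_norm A"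
proof -
  have "\<bar>A $ a $ b\<bar> \<le> (\<Sum>b\<in>UNIV. \<bar>A $ a $ b\<bar>)"
    by (rule member_le_sum) auto
  then show ?thesis using row_abs_sum_le_matrix_l1_norm by (rule order_trans)
qed

lemma norm_le_matrix_l1_norm: "norm A \<le> matrix_l1_norm A"
proof -
  have "norm A \<le> (\<Sum>a\<in>UNIV. norm (A $ a))"
    unfolding norm_vec_def by (rule L2_set_le_sum) auto
  also have "\<dots> \<le> matrix_l1_norm A"
    unfolding matrix_l1_norm_def by (intro sum_mono norm_le_l1_cart)
  finally show ?thesis .
qed

lemma abs_mat_pow_nth_le: "\<bar>mat_pow A k $ i $ j\<bar> \<le> matrix_l1_norm A ^ k"
proof (induction k arbitrary: i j)
  case 0
  then show ?case by (simp add: mat_def)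
next
  case (Suc k)
  have "\<bar>mat_pow A (Suc k) $ i $ j\<bar> \<le> (\<Sum>l\<in>UNIV. \<bar>A $ i $ l\<bar> * \<bar>mat_pow A k $ l $ j\<bar>)"
    using sum_abs[of "\<lambda>l. A $ i $ l * mat_pow A k $ l $ j" UNIV]
    by (simp add: matrix_matrix_mult_def abs_mult)
  also have "\<dots> \<le> (\<Sum>l\<in>UNIV. \<bar>A $ i $ l\<bar>) * matrix_l1_norm A ^ k"
    unfolding sum_distrib_right by (intro sum_mono mult_left_mono Suc.IH) auto
  also have "\<dots> \<le> matrix_l1_norm A ^ Suc k"
    by (simp add: mult_right_mono row_abs_sum_le_matrix_l1_norm matrix_l1_norm_nonneg)
  finally show ?case .
qed

lemma summable_mexp_series:
  fixes A :: "real^'n::finite^'n"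
  shows "summable (\<lambda>k. (t ^ k / fact k) *\<^sub>R mat_pow A k)"
proof (rule summable_comparison_test')
  define c where "c = matrix_l1_norm A"
  let ?N = "real CARD('n) * real CARD('n)"
  show "summable (\<lambda>k. ?N * (inverse (fact k) * (\<bar>t\<bar> * c) ^ k))"
    by (intro summable_mult summable_exp)
  fix k
  have "norm ((t ^ k / fact k) *\<^sub>R mat_pow A k) \<le> matrix_l1_norm ((t ^ k / fact k) *\<^sub>R mat_pow A k)"
    by (rule norm_le_matrix_l1_norm)
  also have "\<dots> \<le> (\<Sum>a\<in>(UNIV::'n set). \<Sum>b\<in>(UNIV::'n set). inverse (fact k) * (\<bar>t\<bar> * c) ^ k)"
    unfolding matrix_l1_norm_def
  proof (intro sum_mono)
    fix a b
    have "\<bar>t\<bar> ^ k / fact k * \<bar>mat_pow A k $ a $ b\<bar> \<le> \<bar>t\<bar> ^ k / fact k * c ^ k"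
      unfolding c_def by (intro mult_left_mono abs_mat_pow_nth_le) auto
    then show "\<bar>((t ^ k / fact k) *\<^sub>R mat_pow A k) $ a $ b\<bar> \<le> inverse (fact k) * (\<bar>t\<bar> * c) ^ k"
      by (simp add: abs_mult power_abs power_mult_distrib divide_inverse mult_ac)
  qed
  finally show "norm ((t ^ k / fact k) *\<^sub>R mat_pow A k) \<le> ?N * (inverse (fact k) * (\<bar>t\<bar> * c) ^ k)"
    by simp
qed

lemma bounded_linear_matrix_nth: "bounded_linear (\<lambda>X::real^'n::finite^'m::finite. X $ i $ j)"
  using bounded_linear_compose[OF bounded_linear_vec_nth[of j] bounded_linear_vec_nth[of i]] by simp

lemma bounded_linear_matrix_mult_left: "bounded_linear (\<lambda>X::real^'n::finite^'n. A ** X)"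
  by (rule linear_conv_bounded_linear[THEN iffD1])
    (auto intro!: linearI simp: matrix_add_ldistrib vec_eq_iff matrix_matrix_mult_def sum_distrib_left
      mult_ac distrib_left sum.distrib)

lemma bounded_linear_matrix_mult_right: "bounded_linear (\<lambda>X::real^'n::finite^'n. X ** A)"
  by (rule linear_conv_bounded_linear[THEN iffD1])
    (auto intro!: linearI simp: vec_eq_iff matrix_matrix_mult_def distrib_left distrib_right
      sum.distrib sum_distrib_left mult_ac)

lemma mexp_nth: "mexp t A $ i $ j = (\<Sum>k. (mat_pow A k $ i $ j / fact k) * t ^ k)"
  using bounded_linear.suminf[OF bounded_linear_matrix_nth summable_mexp_series]
  by (simp add: mexp_def mult_ac)

lemma mexp_0 [simp]: "mexp 0 A = mat 1"
proof -
  have "(\<lambda>k. ((0::real) ^ k / fact k) *\<^sub>R mat_pow A k) = (\<lambda>k. if k = 0 then mat 1 else 0)"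
    by auto
  then have "(\<lambda>k. ((0::real) ^ k / fact k) *\<^sub>R mat_pow A k) sums mat 1"
    using sums_single[of 0 "\<lambda>_. mat 1"] by simp
  then show ?thesis unfolding mexp_def by (simp add: sums_iff)
qed

lemma mat_pow_commute: "mat_pow A k ** A = A ** mat_pow A k"
  by (induction k) (simp_all add: matrix_mul_assoc[symmetric])

lemma mexp_series_Suc:
  "(\<lambda>k. (t ^ k / fact k) *\<^sub>R mat_pow A (Suc k)) sums (A ** mexp t A)"
  "(\<lambda>k. (t ^ k / fact k) *\<^sub>R mat_pow A (Suc k)) sums (mexp t A ** A)"
proof -
  have "(\<lambda>k. A ** ((t ^ k / fact k) *\<^sub>R mat_pow A k)) sums (A ** mexp t A)"
    unfolding mexp_def by (intro bounded_linear.sums[OF bounded_linear_matrix_mult_left] summable_sums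
      summable_mexp_series)
  then show "(\<lambda>k. (t ^ k / fact k) *\<^sub>R mat_pow A (Suc k)) sums (A ** mexp t A)"
    by (simp add: matrix_scalar_ac scalar_matrix_assoc[symmetric])
  have "(\<lambda>k. ((t ^ k / fact k) *\<^sub>R mat_pow A k) ** A) sums (mexp t A ** A)"
    unfolding mexp_def by (intro bounded_linear.sums[OF bounded_linear_matrix_mult_right] summable_sums
      summable_mexp_series)
  then show "(\<lambda>k. (t ^ k / fact k) *\<^sub>R mat_pow A (Suc k)) sums (mexp t A ** A)"
    by (simp add: scalar_matrix_assoc[symmetric] mat_pow_commute)
qed

lemma mexp_commute: "A ** mexp t A = mexp t A ** A"
  using mexp_series_Suc sums_unique2 by blast

lemma mexp_has_real_derivative:
  "((\<lambda>t. mexp t A $ i $ j) has_real_derivative (A ** mexp t A) $ i $ j) (at t within T)"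
proof -
  define c where "c k = mat_pow A k $ i $ j / fact k" for k
  have "summable (\<lambda>k. c k * s ^ k)" for s
    using bounded_linear.summable[OF bounded_linear_matrix_nth summable_mexp_series]
    by (simp add: c_def mult_ac)
  then have "((\<lambda>t. \<Sum>k. c k * t ^ k) has_real_derivative (\<Sum>k. diffs c k * t ^ k)) (at t)"
    by (rule termdiffs_strong_converges_everywhere)
  moreover have "(\<lambda>k. diffs c k * t ^ k) sums (A ** mexp t A) $ i $ j"
  proof -
    have "diffs c k * t ^ k = ((t ^ k / fact k) *\<^sub>R mat_pow A (Suc k)) $ i $ j" for k
      by (simp add: diffs_def c_def del: mat_pow.simps)
    then show ?thesis
      using bounded_linear.sums[OF bounded_linear_matrix_nth mexp_series_Suc(1)] by simp
  qed
  ultimately show ?thesis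
    by (simp add: mexp_nth c_def sums_iff has_field_derivative_at_within)
qed

lemma mexp_minus_has_real_derivative:
  "((\<lambda>t. mexp (- t) A $ i $ j) has_real_derivative (- (A ** mexp (- t) A)) $ i $ j) (at t within T)"
proof -
  have "((\<lambda>t. mexp (- t) A $ i $ j) has_real_derivative (A ** mexp (- t) A) $ i $ j * (- 1)) (at t)"
    by (rule DERIV_chain2[of "\<lambda>s. mexp s A $ i $ j", OF mexp_has_real_derivative])
      (auto intro!: derivative_eq_intros)
  then show ?thesis by (simp add: has_field_derivative_at_within)
qed

lemma matrix_mult_has_real_derivative:
  fixes F G :: "real \<Rightarrow> real^'n::finite^'n"
  assumes "\<And>a b. ((\<lambda>t. F t $ a $ b) has_real_derivative F' $ a $ b) (at t within T)"
    and "\<And>a b. ((\<lambda>t. G t $ a $ b) has_real_derivative G' $ a $ b) (at t within T)"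
  shows "((\<lambda>t. (F t ** G t) $ i $ j) has_real_derivative (F' ** G t + F t ** G') $ i $ j) (at t within T)"
proof -
  have "((\<lambda>t. \<Sum>k\<in>UNIV. F t $ i $ k * G t $ k $ j) has_real_derivative
      (\<Sum>k\<in>UNIV. F' $ i $ k * G t $ k $ j + F t $ i $ k * G' $ k $ j)) (at t within T)"
    by (intro DERIV_sum DERIV_mult'[OF assms(1) assms(2), THEN DERIV_cong]) simp
  then show ?thesis by (simp add: matrix_matrix_mult_def sum.distrib)
qed

lemma matrix_vector_mult_has_real_derivative:
  fixes F :: "real \<Rightarrow> real^'n::finite^'m::finite" and v :: "real \<Rightarrow> real^'n"
  assumes "\<And>a b. ((\<lambda>t. F t $ a $ b) has_real_derivative F' $ a $ b) (at t within T)"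
    and "\<And>b. ((\<lambda>t. v t $ b) has_real_derivative v' $ b) (at t within T)"
  shows "((\<lambda>t. (F t *v v t) $ i) has_real_derivative (F' *v v t + F t *v v') $ i) (at t within T)"
proof -
  have "((\<lambda>t. \<Sum>k\<in>UNIV. F t $ i $ k * v t $ k) has_real_derivative
      (\<Sum>k\<in>UNIV. F' $ i $ k * v t $ k + F t $ i $ k * v' $ k)) (at t within T)"
    by (intro DERIV_sum DERIV_mult'[OF assms(1) assms(2), THEN DERIV_cong]) simp
  then show ?thesis by (simp add: matrix_vector_mult_def sum.distrib)
qed

lemma matrix_add_rdistrib: "(A + B) ** C = A ** C + B ** (C::real^'n::finite^'m::finite)"
  by (simp add: vec_eq_iff matrix_matrix_mult_def distrib_right sum.distrib)

lemma matrix_mult_uminus_left: "(- A) ** B = - (A ** (B::real^'n::finite^'m::finite))"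
  by (simp add: vec_eq_iff matrix_matrix_mult_def sum_negf)

lemma matrix_vector_mult_uminus_left: "(- A) *v x = - (A *v (x::real^'n::finite))"
  by (simp add: vec_eq_iff matrix_vector_mult_def sum_negf)

lemma matrix_vector_mult_uminus_right: "A *v (- x) = - (A *v (x::real^'n::finite))"
  by (simp add: vec_eq_iff matrix_vector_mult_def sum_negf)

lemma mexp_minus_mult_solution:
  fixes F :: "real \<Rightarrow> real^'n::finite^'n"
  assumes F': "\<And>t a b. ((\<lambda>t. F t $ a $ b) has_real_derivative (A ** F t) $ a $ b) (at t)"
  shows "mexp (- t) A ** F t = F 0"
proof -
  have "((\<lambda>s. (mexp (- s) A ** F s) $ a $ b) has_real_derivative 0) (at s)" for s a b
  proof -
    have "((\<lambda>s. (mexp (- s) A ** F s) $ a $ b) has_real_derivative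
        ((- (A ** mexp (- s) A)) ** F s + mexp (- s) A ** (A ** F s)) $ a $ b) (at s)"
      by (intro matrix_mult_has_real_derivative mexp_minus_has_real_derivative F')
    moreover have "(- (A ** mexp (- s) A)) ** F s + mexp (- s) A ** (A ** F s) = 0"
      by (simp add: matrix_mult_uminus_left mexp_commute matrix_mul_assoc)
    ultimately show ?thesis by simp
  qed
  then have "(mexp (- t) A ** F t) $ a $ b = (mexp (- 0) A ** F 0) $ a $ b" for a b
    by (intro DERIV_isconst_all allI)
  then show ?thesis by (simp add: vec_eq_iff)
qed

lemma mexp_minus_inverse:
  "mexp (- t) A ** mexp t A = mat 1"
  "mexp t A ** mexp (- t) A = mat 1"
proof -
  have *: "mexp (- s) A ** mexp s A = mat 1" for s
    using mexp_minus_mult_solution[where F="\<lambda>s. mexp s A"] by (simp add: mexp_has_real_derivative)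
  show "mexp (- t) A ** mexp t A = mat 1" by (rule *)
  show "mexp t A ** mexp (- t) A = mat 1" using *[of "- t"] by simp
qed

lemma linear_ode_solution_eq_mexp:
  fixes F :: "real \<Rightarrow> real^'n::finite^'n"
  assumes "\<And>t a b. ((\<lambda>t. F t $ a $ b) has_real_derivative (A ** F t) $ a $ b) (at t)"
  shows "F t = mexp t A ** F 0"
proof -
  have "F t = (mexp t A ** mexp (- t) A) ** F t" by (simp add: mexp_minus_inverse)
  also have "\<dots> = mexp t A ** F 0"
    by (simp flip: matrix_mul_assoc add: mexp_minus_mult_solution[OF assms])
  finally show ?thesis .
qed

lemma mexp_add: "mexp (s + t) A = mexp s A ** mexp t A"
proof -
  have "((\<lambda>s. mexp (s + t) A $ a $ b) has_real_derivative (A ** mexp (s + t) A) $ a $ b * 1) (at s)"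
    for s a b
    by (rule DERIV_chain2[of "\<lambda>x. mexp x A $ a $ b", OF mexp_has_real_derivative])
      (auto intro!: derivative_eq_intros)
  then have "mexp (s + t) A = mexp s A ** mexp (0 + t) A"
    by (intro linear_ode_solution_eq_mexp) simp
  then show ?thesis by simp
qed

lemma mexp_add_scaled_identity: "mexp t (A + c *\<^sub>R mat 1) = exp (c * t) *\<^sub>R mexp t A"
proof -
  have "((\<lambda>s. (exp (c * s) *\<^sub>R mexp s A) $ a $ b) has_real_derivative
      ((A + c *\<^sub>R mat 1) ** (exp (c * s) *\<^sub>R mexp s A)) $ a $ b) (at s)" for s a b
  proof -
    have "((\<lambda>s. exp (c * s) * mexp s A $ a $ b) has_real_derivative
        exp (c * s) * (A ** mexp s A) $ a $ b + c * exp (c * s) * mexp s A $ a $ b) (at s)"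
      by (rule DERIV_mult'[OF _ mexp_has_real_derivative]) (auto intro!: derivative_eq_intros)
    moreover have "(A + c *\<^sub>R mat 1) ** (exp (c * s) *\<^sub>R mexp s A)
        = exp (c * s) *\<^sub>R (A ** mexp s A) + (c * exp (c * s)) *\<^sub>R mexp s A"
      by (simp add: matrix_add_rdistrib matrix_scalar_ac scalar_matrix_assoc[symmetric]
          scaleR_add_right)
    ultimately show ?thesis by simp
  qed
  from linear_ode_solution_eq_mexp[OF this] show ?thesis by simp
qed

lemma continuous_on_mexp_nth: "continuous_on S (\<lambda>t. mexp t A $ i $ j)"
  by (rule continuous_at_imp_continuous_on) (auto intro: DERIV_isCont[OF mexp_has_real_derivative])

lemma mexp_nth_nonneg_of_nonneg:
  assumes "\<And>a b. 0 \<le> B $ a $ b" and "0 \<le> t"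
  shows "0 \<le> mexp t B $ i $ j"
proof -
  have "0 \<le> mat_pow B k $ i $ j" for k
    using assms(1) by (induction k arbitrary: i) (auto simp: mat_def matrix_matrix_mult_def intro!: sum_nonneg)
  moreover have "summable (\<lambda>k. (mat_pow B k $ i $ j / fact k) * t ^ k)"
    using bounded_linear.summable[OF bounded_linear_matrix_nth summable_mexp_series]
    by (simp add: mult_ac)
  ultimately show ?thesis
    unfolding mexp_nth using \<open>0 \<le> t\<close> by (intro suminf_nonneg) auto
qed

text \<open>A matrix with nonnegative off-diagonal entries becomes nonnegative after adding a large
  multiple of the identity, which only rescales the exponential by a positive factor.\<close>

lemma mexp_nth_nonneg:
  assumes "\<And>a b. a \<noteq> b \<Longrightarrow> 0 \<le> A $ a $ b" and "0 \<le> t"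
  shows "0 \<le> mexp t A $ i $ j"
proof -
  define c where "c = matrix_l1_norm A"
  have "0 \<le> (A + c *\<^sub>R mat 1) $ a $ b" for a b
    using assms(1)[of a b] abs_nth_le_matrix_l1_norm[of A a a]
    by (cases "a = b") (auto simp: mat_def c_def)
  then have "0 \<le> mexp t (A + c *\<^sub>R mat 1) $ i $ j"
    using \<open>0 \<le> t\<close> by (rule mexp_nth_nonneg_of_nonneg)
  then show ?thesis by (simp add: mexp_add_scaled_identity zero_le_mult_iff)
qed

lemma mexp_row_sum:
  assumes "\<And>a. (\<Sum>b\<in>UNIV. A $ a $ b) = 0"
  shows "(\<Sum>j\<in>UNIV. mexp t A $ i $ j) = 1"
proof -
  have "((\<lambda>t. \<Sum>j\<in>UNIV. mexp t A $ i $ j) has_real_derivative 0) (at t)" for t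
  proof -
    have "((\<lambda>t. \<Sum>j\<in>UNIV. mexp t A $ i $ j) has_real_derivative (\<Sum>j\<in>UNIV. (A ** mexp t A) $ i $ j))
        (at t)"
      by (intro DERIV_sum mexp_has_real_derivative)
    moreover have "(\<Sum>j\<in>UNIV. (mexp t A ** A) $ i $ j) = 0"
      by (simp add: matrix_matrix_mult_def sum.swap[of _ UNIV UNIV] sum_distrib_left[symmetric] assms)
    ultimately show ?thesis by (simp add: mexp_commute)
  qed
  then have "(\<Sum>j\<in>UNIV. mexp t A $ i $ j) = (\<Sum>j\<in>UNIV. mexp 0 A $ i $ j)"
    by (intro DERIV_isconst_all allI)
  then show ?thesis by (simp add: mat_def)
qed

subsection \<open>Transition matrices of generators\<close>

lemma gens_mono: "(\<And>i. D i \<subseteq> D' i) \<Longrightarrow> gens D \<subseteq> gens D'"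
  unfolding gens_def by blast

lemma E_set_sum_eq_0: "q \<in> E_set i \<Longrightarrow> (\<Sum>j\<in>UNIV. q $ j) = 0"
  unfolding E_set_def by (simp add: sum.remove[of UNIV i])

lemma mexp_nth_stochastic:
  assumes "Q \<in> gens E_set" and "0 \<le> t"
  shows "0 \<le> mexp t Q $ i $ j" and "mexp t Q $ i $ j \<le> 1"
proof -
  have row: "Q $ a \<in> E_set a" for a
    using assms(1) by (simp add: gens_def)
  show nonneg: "0 \<le> mexp t Q $ a $ b" for a b
    using row \<open>0 \<le> t\<close> by (intro mexp_nth_nonneg) (auto simp: E_set_def)
  have "mexp t Q $ i $ j \<le> (\<Sum>b\<in>UNIV. mexp t Q $ i $ b)"
    by (rule member_le_sum) (auto intro: nonneg)
  also have "\<dots> = 1"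
    using row by (intro mexp_row_sum E_set_sum_eq_0)
  finally show "mexp t Q $ i $ j \<le> 1" .
qed

subsection \<open>Integrability\<close>

lemma set_integrable_of_cond_I:
  assumes "cond_I D g" and "q \<in> D j" and "continuous_on {0..} (\<lambda>t. g t j q)"
  shows "set_integrable lborel {0::real..} (\<lambda>t. g t j q)"
  unfolding set_integrable_def
proof (rule integrableI_bounded)
  show "(\<lambda>t. indicator {0::real..} t *\<^sub>R g t j q) \<in> borel_measurable lborel"
    using borel_measurable_continuous_on_indicator[OF _ assms(3)] by simp
  let ?S = "{(i, q'). q' \<in> D i \<and> norm q' \<le> norm q + 1}"
  have "(\<integral>\<^sup>+ t. ennreal (norm (indicator {0::real..} t *\<^sub>R g t j q)) \<partial>lborel)
      \<le> (\<integral>\<^sup>+ t. indicator {0..} t * (SUP p\<in>?S. ennreal \<bar>g t (fst p) (snd p)\<bar>) \<partial>lborel)"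
  proof (rule nn_integral_mono)
    fix t :: real
    have "(j, q) \<in> ?S" using assms(2) by simp
    then have "ennreal \<bar>g t j q\<bar> \<le> (SUP p\<in>?S. ennreal \<bar>g t (fst p) (snd p)\<bar>)"
      by (rule SUP_upper2) simp
    then show "ennreal (norm (indicator {0::real..} t *\<^sub>R g t j q))
        \<le> indicator {0..} t * (SUP p\<in>?S. ennreal \<bar>g t (fst p) (snd p)\<bar>)"
      by (cases "t \<ge> 0") auto
  qed
  also have "\<dots> < \<infinity>"
    using assms(1) unfolding cond_I_def by (simp add: add_nonneg_pos)
  finally show "(\<integral>\<^sup>+ t. ennreal (norm (indicator {0::real..} t *\<^sub>R g t j q)) \<partial>lborel) < \<infinity>" .
qed

lemma set_integrable_bounded_mult:
  fixes h w :: "real \<Rightarrow> real"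
  assumes "set_integrable lborel A h" and "w \<in> borel_measurable lborel"
    and "\<And>t. t \<in> A \<Longrightarrow> \<bar>w t\<bar> \<le> B"
  shows "set_integrable lborel A (\<lambda>t. w t * h t)"
proof (rule set_integrable_bound[OF set_integrable_mult_right[OF assms(1), of B]])
  have "(\<lambda>t. indicator A t *\<^sub>R h t) \<in> borel_measurable lborel"
    using assms(1) unfolding set_integrable_def by (rule borel_measurable_integrable)
  then have "(\<lambda>t. w t * (indicator A t *\<^sub>R h t)) \<in> borel_measurable lborel"
    using assms(2) by measurable
  then show "set_borel_measurable lborel A (\<lambda>t. w t * h t)"
    unfolding set_borel_measurable_def by (simp add: mult.left_commute)
  have "\<bar>w t * h t\<bar> \<le> \<bar>B * h t\<bar>" if "t \<in> A" for t
    using assms(3)[OF that] by (simp add: abs_mult mult_right_mono)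
  then show "AE t in lborel. t \<in> A \<longrightarrow> norm (w t * h t) \<le> norm (B * h t)"
    by simp
qed

lemma set_integrable_sum:
  fixes h :: "'i \<Rightarrow> real \<Rightarrow> real"
  assumes "\<And>m. m \<in> I \<Longrightarrow> set_integrable lborel A (h m)"
  shows "set_integrable lborel A (\<lambda>t. \<Sum>m\<in>I. h m t)"
  using assms unfolding set_integrable_def
  by (auto simp: sum_distrib_left)

lemma set_integral_sum:
  fixes h :: "'i \<Rightarrow> real \<Rightarrow> real"
  assumes "\<And>m. m \<in> I \<Longrightarrow> set_integrable lborel A (h m)"
  shows "(LINT t:A|lborel. (\<Sum>m\<in>I. h m t)) = (\<Sum>m\<in>I. LINT t:A|lborel. h m t)"
  using assms unfolding set_integrable_def set_lebesgue_integral_def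
  by (simp add: sum_distrib_left Bochner_Integration.integral_sum)

lemma set_integral_split_at:
  fixes h :: "real \<Rightarrow> real"
  assumes "set_integrable lborel {0..} h" and "0 \<le> e"
  shows "(LINT t:{0..}|lborel. h t) = integral {0..e} h + (LINT t:{e<..}|lborel. h t)"
proof -
  have split: "{0..} = {0..e} \<union> {e<..}" using \<open>0 \<le> e\<close> by auto
  have init: "set_integrable lborel {0..e} h" and tail: "set_integrable lborel {e<..} h"
    using \<open>0 \<le> e\<close> by (auto intro!: set_integrable_subset[OF assms(1)])
  have "(LINT t:{0..}|lborel. h t) = (LINT t:{0..e}|lborel. h t) + (LINT t:{e<..}|lborel. h t)"
    unfolding split by (rule set_integral_Un[OF _ init tail]) auto
  then show ?thesis by (simp add: set_borel_integral_eq_integral(2)[OF init])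
qed

lemma set_integrable_mexp_mult:
  assumes "Q \<in> gens E_set" and "\<And>j. set_integrable lborel {0..} (\<lambda>t. v t $ j)"
  shows "set_integrable lborel {0..} (\<lambda>t. (mexp t Q *v v t) $ i)"
proof -
  have "\<bar>mexp t Q $ i $ j\<bar> \<le> 1" if "t \<in> {0..}" for t j
    using mexp_nth_stochastic[OF assms(1), of t i j] that by (simp add: abs_le_iff)
  then show ?thesis
    unfolding matrix_vector_mult_def using assms(2)
    by (auto intro!: set_integrable_sum set_integrable_bounded_mult[where B=1]
        borel_measurable_continuous_onI continuous_on_mexp_nth)
qed

subsection \<open>Deviating on an initial interval\<close>

definition payoff_rate :: "(real \<Rightarrow> 'n::finite \<Rightarrow> real^'n \<Rightarrow> real) \<Rightarrow> real^'n^'n \<Rightarrow> real \<Rightarrow> real^'n" where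
  "payoff_rate f Q t = (\<chi> j. f t j (Q $ j))"

text \<open>\<open>tail_value f Q t $ j\<close> is the payoff collected after time \<open>t\<close> when the chain is in state \<open>j\<close>
  at time \<open>t\<close>, i.e. \<open>\<integral>\<^sub>t\<^sup>\<infinity> (exp((s - t)Q) r(s))\<^sub>j ds\<close>; factoring out \<open>exp(-tQ)\<close> avoids integrals
  depending on the parameter \<open>t\<close>.\<close>

definition tail_value :: "(real \<Rightarrow> 'n::finite \<Rightarrow> real^'n \<Rightarrow> real) \<Rightarrow> real^'n^'n \<Rightarrow> real \<Rightarrow> real^'n" where
  "tail_value f Q t = mexp (- t) Q *v
     (payoff_vec f Q - (\<chi> m. integral {0..t} (\<lambda>s. (mexp s Q *v payoff_rate f Q s) $ m)))"

definition deviation_value ::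
    "(real \<Rightarrow> 'n::finite \<Rightarrow> real^'n \<Rightarrow> real) \<Rightarrow> real^'n^'n \<Rightarrow> real^'n^'n \<Rightarrow> 'n \<Rightarrow> real \<Rightarrow> real" where
  "deviation_value f Q Qs i t =
     integral {0..t} (\<lambda>s. (mexp s Q *v payoff_rate f Q s) $ i) + (mexp t Q *v tail_value f Qs t) $ i"

definition deviation_gain ::
    "(real \<Rightarrow> 'n::finite \<Rightarrow> real^'n \<Rightarrow> real) \<Rightarrow> real^'n^'n \<Rightarrow> real^'n^'n \<Rightarrow> real \<Rightarrow> real^'n" where
  "deviation_gain f Q Qs t = payoff_rate f Q t - payoff_rate f Qs t + (Q - Qs) *v tail_value f Qs t"

lemma tail_value_0: "tail_value f Q 0 = payoff_vec f Q"
  by (simp add: tail_value_def zero_vec_def[symmetric])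

lemma deviation_value_0: "deviation_value f Q Qs i 0 = payoff f i Qs"
  by (simp add: deviation_value_def tail_value_0 payoff_vec_def)

lemma set_integral_greaterThan_eq_tail_value:
  assumes Q: "Q \<in> gens E_set"
    and int: "\<And>j. set_integrable lborel {0..} (\<lambda>t. payoff_rate f Q t $ j)" and "0 \<le> e"
  shows "(LINT t:{e<..}|lborel. (mexp t Q *v payoff_rate f Q t) $ m) = (mexp e Q *v tail_value f Q e) $ m"
proof -
  have "payoff_vec f Q $ m = (LINT t:{0..}|lborel. (mexp t Q *v payoff_rate f Q t) $ m)"
    by (simp add: payoff_vec_def payoff_def payoff_rate_def matrix_vector_mult_def)
  then show ?thesis
    using set_integral_split_at[OF set_integrable_mexp_mult[OF Q int] \<open>0 \<le> e\<close>]
    by (simp add: tail_value_def matrix_vector_mul_assoc mexp_minus_inverse)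
qed

lemma cat_trans_after:
  "\<epsilon> < t \<Longrightarrow> cat_trans Q \<epsilon> Qs t = (mexp \<epsilon> Q ** mexp (- \<epsilon>) Qs) ** mexp t Qs"
  using mexp_add[of "- \<epsilon>" t Qs] by (simp add: cat_trans_def matrix_mul_assoc)

lemma payoff_cat_eq_deviation_value:
  assumes Q: "Q \<in> gens E_set" and Qs: "Qs \<in> gens E_set"
    and int_Q: "\<And>j. set_integrable lborel {0..} (\<lambda>t. payoff_rate f Q t $ j)"
    and int_Qs: "\<And>j. set_integrable lborel {0..} (\<lambda>t. payoff_rate f Qs t $ j)"
    and "0 < e"
  shows "payoff_cat f i Q e Qs = deviation_value f Q Qs i e"
proof -
  define g where "g t = (mexp t Q *v payoff_rate f Q t) $ i" for t
  define u where "u t = mexp t Qs *v payoff_rate f Qs t" for t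
  define C where "C = mexp e Q ** mexp (- e) Qs"
  define F where "F t = (cat_trans Q e Qs t *v payoff_rate f (cat_gen Q e Qs t) t) $ i" for t
  have F_init: "F t = g t" if "t \<in> {0..e}" for t
    using that by (simp add: F_def g_def cat_trans_def cat_gen_def)
  have F_tail: "F t = (\<Sum>m\<in>UNIV. C $ i $ m * u t $ m)" if "t \<in> {e<..}" for t
    using that cat_trans_after[of e t Q Qs] unfolding C_def[symmetric]
    by (simp add: F_def u_def cat_gen_def matrix_vector_mul_assoc[symmetric]
        matrix_vector_mult_def[of C])
  have u_int: "set_integrable lborel {0..} (\<lambda>t. u t $ m)" for m
    unfolding u_def using Qs int_Qs by (rule set_integrable_mexp_mult)
  have "set_integrable lborel {0..e} F \<longleftrightarrow> set_integrable lborel {0..e} g"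
    by (rule set_integrable_cong) (simp_all add: F_init)
  then have "set_integrable lborel {0..e} F"
    unfolding g_def by (auto intro: set_integrable_subset[OF set_integrable_mexp_mult[OF Q int_Q]])
  moreover have "set_integrable lborel {e<..} F \<longleftrightarrow>
      set_integrable lborel {e<..} (\<lambda>t. \<Sum>m\<in>UNIV. C $ i $ m * u t $ m)"
    by (rule set_integrable_cong) (simp_all add: F_tail)
  then have "set_integrable lborel {e<..} F"
    using \<open>0 < e\<close> by (auto intro!: set_integrable_sum set_integrable_subset[OF u_int])
  ultimately have "set_integrable lborel ({0..e} \<union> {e<..}) F"
    by (rule set_integrable_Un) auto
  moreover have "{0..e} \<union> {e<..} = {0::real..}" using \<open>0 < e\<close> by auto
  ultimately have F_int: "set_integrable lborel {0..} F" by simp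
  have "payoff_cat f i Q e Qs = (LINT t:{0..}|lborel. F t)"
    by (simp add: payoff_cat_def F_def payoff_rate_def matrix_vector_mult_def)
  also have "\<dots> = integral {0..e} F + (LINT t:{e<..}|lborel. F t)"
    using F_int \<open>0 < e\<close> by (simp add: set_integral_split_at)
  also have "integral {0..e} F = integral {0..e} g"
    by (rule integral_cong) (simp add: F_init)
  also have "(LINT t:{e<..}|lborel. F t) = (LINT t:{e<..}|lborel. (\<Sum>m\<in>UNIV. C $ i $ m * u t $ m))"
    by (rule set_lebesgue_integral_cong) (simp_all add: F_tail)
  also have "\<dots> = (\<Sum>m\<in>UNIV. C $ i $ m * (LINT t:{e<..}|lborel. u t $ m))"
    using \<open>0 < e\<close> by (subst set_integral_sum) (auto intro!: set_integrable_subset[OF u_int])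
  also have "\<dots> = ((C ** mexp e Qs) *v tail_value f Qs e) $ i"
    using \<open>0 < e\<close>
    by (simp add: u_def set_integral_greaterThan_eq_tail_value[OF Qs int_Qs]
        matrix_vector_mul_assoc[symmetric] matrix_vector_mult_def[of C])
  finally show ?thesis
    by (simp add: deviation_value_def g_def C_def matrix_mul_assoc[symmetric] mexp_minus_inverse)
qed

lemma continuous_on_mexp_mult:
  assumes "\<And>j. continuous_on S (\<lambda>t. v t $ j)"
  shows "continuous_on S (\<lambda>t. (mexp t Q *v v t) $ i)"
  unfolding matrix_vector_mult_def
  by (auto intro!: continuous_on_sum continuous_on_mult continuous_on_mexp_nth assms)

lemma tail_value_has_real_derivative:
  assumes cont: "\<And>j. continuous_on {0..} (\<lambda>t. payoff_rate f Q t $ j)" and t: "t \<in> {0..b}"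
  shows "((\<lambda>t. tail_value f Q t $ m) has_real_derivative
      (- (Q *v tail_value f Q t) - payoff_rate f Q t) $ m) (at t within {0..b})"
proof -
  define V where "V t = payoff_vec f Q - (\<chi> m. integral {0..t} (\<lambda>s. (mexp s Q *v payoff_rate f Q s) $ m))"
    for t
  have "((\<lambda>t. V t $ m) has_real_derivative (- (mexp t Q *v payoff_rate f Q t)) $ m) (at t within {0..b})"
    for m
  proof -
    have "continuous_on {0..b} (\<lambda>s. (mexp s Q *v payoff_rate f Q s) $ m)"
      by (intro continuous_on_mexp_mult continuous_on_subset[OF cont]) auto
    from integral_has_real_derivative[OF this t] show ?thesis
      unfolding V_def by (auto intro!: derivative_eq_intros)
  qed
  then have d: "((\<lambda>t. (mexp (- t) Q *v V t) $ m) has_real_derivative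
      ((- (Q ** mexp (- t) Q)) *v V t + mexp (- t) Q *v (- (mexp t Q *v payoff_rate f Q t))) $ m)
      (at t within {0..b})"
    by (intro matrix_vector_mult_has_real_derivative mexp_minus_has_real_derivative)
  have eq: "(- (Q ** mexp (- t) Q)) *v V t + mexp (- t) Q *v (- (mexp t Q *v payoff_rate f Q t))
      = - (Q *v (mexp (- t) Q *v V t)) - payoff_rate f Q t"
    by (simp add: matrix_vector_mult_uminus_left matrix_vector_mult_uminus_right
        matrix_vector_mul_assoc mexp_minus_inverse)
  show ?thesis
    using d unfolding eq tail_value_def V_def[symmetric] .
qed

lemma continuous_on_tail_value:
  assumes "\<And>j. continuous_on {0..} (\<lambda>t. payoff_rate f Q t $ j)"
  shows "continuous_on {0..b} (\<lambda>t. tail_value f Q t $ m)"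
  unfolding continuous_on_eq_continuous_within
  using DERIV_continuous[OF tail_value_has_real_derivative[OF assms]] by blast

lemma deviation_value_has_real_derivative:
  assumes cont_Q: "\<And>j. continuous_on {0..} (\<lambda>t. payoff_rate f Q t $ j)"
    and cont_Qs: "\<And>j. continuous_on {0..} (\<lambda>t. payoff_rate f Qs t $ j)"
    and t: "t \<in> {0..b}"
  shows "(deviation_value f Q Qs i has_real_derivative (mexp t Q *v deviation_gain f Q Qs t) $ i)
      (at t within {0..b})"
proof -
  let ?P = "mexp t Q" and ?W = "tail_value f Qs t"
  have "((\<lambda>t. integral {0..t} (\<lambda>s. (mexp s Q *v payoff_rate f Q s) $ i)) has_real_derivative
      (?P *v payoff_rate f Q t) $ i) (at t within {0..b})"
    by (intro integral_has_real_derivative continuous_on_mexp_mult continuous_on_subset[OF cont_Q] t)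
      auto
  moreover have "((\<lambda>t. (mexp t Q *v tail_value f Qs t) $ i) has_real_derivative
      ((Q ** ?P) *v ?W + ?P *v (- (Qs *v ?W) - payoff_rate f Qs t)) $ i) (at t within {0..b})"
    by (intro matrix_vector_mult_has_real_derivative mexp_has_real_derivative
        tail_value_has_real_derivative cont_Qs t)
  ultimately have "(deviation_value f Q Qs i has_real_derivative
      (?P *v payoff_rate f Q t + ((Q ** ?P) *v ?W + ?P *v (- (Qs *v ?W) - payoff_rate f Qs t))) $ i)
      (at t within {0..b})"
    unfolding deviation_value_def[abs_def] vector_add_component by (rule DERIV_add)
  moreover have "(Q ** ?P) *v ?W = ?P *v (Q *v ?W)"
    by (simp add: mexp_commute matrix_vector_mul_assoc)
  then have "?P *v payoff_rate f Q t + ((Q ** ?P) *v ?W + ?P *v (- (Qs *v ?W) - payoff_rate f Qs t))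
      = ?P *v deviation_gain f Q Qs t"
    by (simp add: deviation_gain_def matrix_vector_right_distrib matrix_vector_mult_diff_distrib
        matrix_vector_mult_diff_rdistrib matrix_vector_mult_uminus_right)
  ultimately show ?thesis by simp
qed

lemma continuous_on_deviation_gain:
  assumes "\<And>j. continuous_on {0..} (\<lambda>t. payoff_rate f Q t $ j)"
    and "\<And>j. continuous_on {0..} (\<lambda>t. payoff_rate f Qs t $ j)"
  shows "continuous_on {0..b} (\<lambda>t. deviation_gain f Q Qs t $ j)"
proof -
  have "continuous_on {0..b} (\<lambda>t. payoff_rate f Q t $ j)" "continuous_on {0..b} (\<lambda>t. payoff_rate f Qs t $ j)"
    by (auto intro: continuous_on_subset[OF assms(1)] continuous_on_subset[OF assms(2)])
  then show ?thesis
    unfolding deviation_gain_def matrix_vector_mult_def using continuous_on_tail_value[OF assms(2)]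
    by (auto intro!: continuous_on_add continuous_on_diff continuous_on_sum continuous_on_mult)
qed

lemma deviation_gain_0:
  "deviation_gain f Q Qs 0 $ j = Gamma f Qs j (Q $ j) - Gamma f Qs j (Qs $ j)"
  by (simp add: deviation_gain_def tail_value_0 Gamma_def payoff_rate_def matrix_vector_mult_def
      inner_vec_def algebra_simps sum_subtractf)

lemma deviation_gain_eq_0: "Q $ j = Qs $ j \<Longrightarrow> deviation_gain f Q Qs t $ j = 0"
  by (simp add: deviation_gain_def payoff_rate_def matrix_vector_mult_def)

lemma eventually_deviation_gain_nonpos:
  assumes cont_Q: "\<And>j. continuous_on {0..} (\<lambda>t. payoff_rate f Q t $ j)"
    and cont_Qs: "\<And>j. continuous_on {0..} (\<lambda>t. payoff_rate f Qs t $ j)"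
    and better: "\<And>j. Q $ j \<noteq> Qs $ j \<Longrightarrow> Gamma f Qs j (Q $ j) < Gamma f Qs j (Qs $ j)"
  shows "eventually (\<lambda>t. \<forall>j. deviation_gain f Q Qs t $ j \<le> 0) (at_right 0)"
proof (rule eventually_all_finite)
  fix j
  show "eventually (\<lambda>t. deviation_gain f Q Qs t $ j \<le> 0) (at_right 0)"
  proof (cases "Q $ j = Qs $ j")
    case True
    then show ?thesis by (simp add: deviation_gain_eq_0)
  next
    case False
    have "((\<lambda>t. deviation_gain f Q Qs t $ j) \<longlongrightarrow> deviation_gain f Q Qs 0 $ j) (at_right 0)"
      by (rule continuous_on_Icc_at_rightD[OF continuous_on_deviation_gain[OF cont_Q cont_Qs, of 1]]) simp
    moreover have "deviation_gain f Q Qs 0 $ j < 0"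
      using better[OF False] by (simp add: deviation_gain_0)
    ultimately show ?thesis
      by (rule order_tendstoD(2)[THEN eventually_mono]) simp
  qed
qed

lemma payoff_cat_le_payoff:
  assumes Q: "Q \<in> gens E_set" and Qs: "Qs \<in> gens E_set"
    and cont_Q: "\<And>j. continuous_on {0..} (\<lambda>t. payoff_rate f Q t $ j)"
    and cont_Qs: "\<And>j. continuous_on {0..} (\<lambda>t. payoff_rate f Qs t $ j)"
    and int_Q: "\<And>j. set_integrable lborel {0..} (\<lambda>t. payoff_rate f Q t $ j)"
    and int_Qs: "\<And>j. set_integrable lborel {0..} (\<lambda>t. payoff_rate f Qs t $ j)"
    and gain: "eventually (\<lambda>t. \<forall>j. deviation_gain f Q Qs t $ j \<le> 0) (at_right 0)"
  shows "\<exists>\<epsilon>>0. \<forall>\<epsilon>'. 0 < \<epsilon>' \<and> \<epsilon>' \<le> \<epsilon> \<longrightarrow> payoff_cat f i Q \<epsilon>' Qs \<le> payoff f i Qs"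
proof -
  obtain b :: real where "0 < b" and b: "\<And>t. 0 < t \<Longrightarrow> t < b \<Longrightarrow> \<forall>j. deviation_gain f Q Qs t $ j \<le> 0"
    using gain unfolding eventually_at_right_field by auto
  have "payoff_cat f i Q e Qs \<le> payoff f i Qs" if e: "0 < e" "e \<le> b" for e
  proof -
    have "deviation_value f Q Qs i e \<le> deviation_value f Q Qs i 0"
    proof (rule DERIV_nonpos_imp_decreasing_open[of 0 e "deviation_value f Q Qs i"])
      show "0 \<le> e" using e by simp
      show "continuous_on {0..e} (deviation_value f Q Qs i)"
        unfolding continuous_on_eq_continuous_within
        using DERIV_continuous[OF deviation_value_has_real_derivative[OF cont_Q cont_Qs]] by blast
      fix t assume t: "0 < t" "t < e"
      have "(deviation_value f Q Qs i has_real_derivative (mexp t Q *v deviation_gain f Q Qs t) $ i) (at t)"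
        using deviation_value_has_real_derivative[OF cont_Q cont_Qs, of t e] t at_within_Icc_at[of 0 t e]
        by simp
      moreover have "(mexp t Q *v deviation_gain f Q Qs t) $ i \<le> 0"
        unfolding matrix_vector_mult_def using b[of t] t e mexp_nth_stochastic(1)[OF Q]
        by (auto intro!: sum_nonpos mult_nonneg_nonpos)
      ultimately show "\<exists>y. DERIV (deviation_value f Q Qs i) t :> y \<and> y \<le> 0" by blast
    qed
    then show ?thesis
      using payoff_cat_eq_deviation_value[OF Q Qs int_Q int_Qs e(1)] by (simp add: deviation_value_0)
  qed
  then show ?thesis using \<open>0 < b\<close> by blast
qed

theorem mainTheorem4:
  fixes D :: "'n::finite \<Rightarrow> (real^'n) set"
    and f ft :: "real \<Rightarrow> 'n \<Rightarrow> real^'n \<Rightarrow> real"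
    and Qs :: "real^'n^'n"
  assumes D_sub: "\<And>i. D i \<subseteq> E_set i"
    and I_f: "cond_I D f"
    and C1: "\<And>i q t. q \<in> D i \<Longrightarrow> t \<ge> 0 \<Longrightarrow>
               ((\<lambda>s. f s i q) has_real_derivative ft t i q) (at t within {0..})"
    and C1_cont: "\<And>i q. q \<in> D i \<Longrightarrow> continuous_on {0..} (\<lambda>t. ft t i q)"
    and I_ft: "cond_I D ft"
    and R: "cond_R D f ft"
    and Qs: "Qs \<in> gens D"
    and strict: "\<And>i Q. Q \<in> gens D \<Longrightarrow> Q $ i \<noteq> Qs $ i \<Longrightarrow>
                   Gamma f Qs i (Qs $ i) > Gamma f Qs i (Q $ i)"
  shows "strong_equilibrium D f Qs"
proof -
  have gens_D: "Q \<in> gens D \<Longrightarrow> Q \<in> gens E_set" for Q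
    using gens_mono[of D E_set] D_sub by blast
  have cont: "continuous_on {0..} (\<lambda>t. payoff_rate f Q t $ j)" if "Q \<in> gens D" for Q j
  proof -
    have "Q $ j \<in> D j" using that by (simp add: gens_def)
    then show ?thesis
      unfolding continuous_on_eq_continuous_within payoff_rate_def
      using DERIV_continuous[OF C1] by simp
  qed
  have int: "set_integrable lborel {0..} (\<lambda>t. payoff_rate f Q t $ j)" if "Q \<in> gens D" for Q j
    using that cont[OF that, of j] I_f by (auto simp: gens_def payoff_rate_def intro: set_integrable_of_cond_I)
  show ?thesis
    unfolding strong_equilibrium_def
  proof (intro conjI allI ballI Qs)
    fix i Q assume Q: "Q \<in> gens D"
    have "eventually (\<lambda>t. \<forall>j. deviation_gain f Q Qs t $ j \<le> 0) (at_right 0)"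
      by (rule eventually_deviation_gain_nonpos[OF cont[OF Q] cont[OF Qs] strict[OF Q]])
    then show "\<exists>\<epsilon>>0. \<forall>\<epsilon>'. 0 < \<epsilon>' \<and> \<epsilon>' \<le> \<epsilon> \<longrightarrow> payoff f i Qs \<ge> payoff_cat f i Q \<epsilon>' Qs"
      by (rule payoff_cat_le_payoff[OF gens_D[OF Q] gens_D[OF Qs] cont[OF Q] cont[OF Qs]
            int[OF Q] int[OF Qs]])
  qed
qed

end
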